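(* For every $N\ge2$ and all masses $m_1,\dots,m_N>0$, $$C(\mathbf m)\ \ge\ C_L(\mathbf m):=\gamma\Big(\sum_{i<j}m_im_j\Big)^{3/2}\Big(\sum_i m_i\Big)^{-1/2}.$$
   Context: Fix $\gamma>0$. Planar configuration space $\mathfrak R=\{\mathbf r=(\mathbf r_1,\dots,\mathbf r_N)\in(\mathbb R^2)^N:\ \mathbf r_i\neq\mathbf r_j \text{ for } i\neq j\}$; $f(\mathbf r)=\sum_{i<j}\frac{\gamma m_im_j}{|\mathbf r_j-\mathbf r_i|}$, $g(\mathbf r)=\sum_i m_i|\mathbf r_i|^2$; $C(\mathbf m)=\min\{f(\mathbf r):\mathbf r\in\mathfrak R,\ g(\mathbf r)=1\}$, where $\mathbf m=(m_1,\dots,m_N)$. *)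

theory Defs
  imports "HOL-Analysis.Analysis"
begin

definition config_space :: "nat \<Rightarrow> (nat \<Rightarrow> real^2) set" where
  "config_space N = {r. \<forall>i<N. \<forall>j<N. i \<noteq> j \<longrightarrow> r i \<noteq> r j}"

definition potential_f :: "real \<Rightarrow> nat \<Rightarrow> (nat \<Rightarrow> real) \<Rightarrow> (nat \<Rightarrow> real^2) \<Rightarrow> real" where
  "potential_f \<gamma> N m r =
     (\<Sum>j<N. \<Sum>i<j. \<gamma> * m i * m j / norm (r j - r i))"

definition moment_g :: "nat \<Rightarrow> (nat \<Rightarrow> real) \<Rightarrow> (nat \<Rightarrow> real^2) \<Rightarrow> real" where
  "moment_g N m r = (\<Sum>i<N. m i * (norm (r i))^2)"

definition C_min :: "real \<Rightarrow> nat \<Rightarrow> (nat \<Rightarrow> real) \<Rightarrow> real" where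
  "C_min \<gamma> N m = Inf {potential_f \<gamma> N m r | r. r \<in> config_space N \<and> moment_g N m r = 1}"

definition C_L :: "real \<Rightarrow> nat \<Rightarrow> (nat \<Rightarrow> real) \<Rightarrow> real" where
  "C_L \<gamma> N m = \<gamma> * (\<Sum>j<N. \<Sum>i<j. m i * m j) powr (3/2) * (\<Sum>i<N. m i) powr (-1/2)"

end

theory Submission
  imports Defs
begin

text \<open>Write \<open>M = \<Sum> m\<^sub>i\<close> and \<open>P = \<Sum>\<^sub>i\<^sub><\<^sub>j m\<^sub>i m\<^sub>j\<close>. By Lagrange's identity
  \<open>\<Sum>\<^sub>i\<^sub><\<^sub>j m\<^sub>i m\<^sub>j |r\<^sub>j - r\<^sub>i|\<^sup>2 = M g - |\<Sum> m\<^sub>i r\<^sub>i|\<^sup>2\<close>, which is at most \<open>M\<close> when \<open>g = 1\<close>.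
  Since \<open>s \<mapsto> s powr (-1/2)\<close> is convex, \<open>1/d\<close> lies above the tangent at \<open>d\<^sup>2 = t\<^sup>2\<close>, i.e.
  \<open>1/d \<ge> 3/(2t) - d\<^sup>2/(2t\<^sup>3)\<close> for every \<open>t > 0\<close>. Summing with weights \<open>m\<^sub>i m\<^sub>j\<close> gives
  \<open>f/\<gamma> \<ge> 3P/(2t) - M/(2t\<^sup>3)\<close>, and the choice \<open>t\<^sup>2 = M/P\<close> turns the right-hand side into
  \<open>P\<^bsup>3/2\<^esup> M\<^bsup>-1/2\<^esup>\<close>.\<close>

lemma lagrange_identity_weighted:
  fixes m :: "nat \<Rightarrow> real" and r :: "nat \<Rightarrow> 'a::real_inner"
  shows "(\<Sum>j<N. \<Sum>i<j. m i * m j * (norm (r j - r i))\<^sup>2)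
     = (\<Sum>i<N. m i) * (\<Sum>i<N. m i * (norm (r i))\<^sup>2) - (norm (\<Sum>i<N. m i *\<^sub>R r i))\<^sup>2"
proof (induction N)
  case 0
  then show ?case by simp
next
  case (Suc N)
  define S where "S = (\<Sum>i<N. m i *\<^sub>R r i)"
  define M where "M = (\<Sum>i<N. m i)"
  define g where "g = (\<Sum>i<N. m i * (norm (r i))\<^sup>2)"
  have new_pairs: "(\<Sum>i<N. m i * m N * (norm (r N - r i))\<^sup>2)
      = m N * (M * (norm (r N))\<^sup>2 - 2 * (r N \<bullet> S) + g)"
    unfolding S_def M_def g_def
    by (simp add: power2_norm_eq_inner inner_diff inner_sum_right sum_distrib_left
        sum_distrib_right sum_subtractf sum.distrib algebra_simps inner_commute)
  have new_centre: "(norm (S + m N *\<^sub>R r N))\<^sup>2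
      = (norm S)\<^sup>2 + 2 * m N * (r N \<bullet> S) + (m N)\<^sup>2 * (norm (r N))\<^sup>2"
    unfolding power2_norm_eq_inner by (simp add: inner_add algebra_simps inner_commute power2_eq_square)
  have "(\<Sum>j<Suc N. \<Sum>i<j. m i * m j * (norm (r j - r i))\<^sup>2)
      = (M * g - (norm S)\<^sup>2) + m N * (M * (norm (r N))\<^sup>2 - 2 * (r N \<bullet> S) + g)"
    using Suc new_pairs by (simp add: S_def M_def g_def)
  also have "\<dots> = (M + m N) * (g + m N * (norm (r N))\<^sup>2) - (norm (S + m N *\<^sub>R r N))\<^sup>2"
    unfolding new_centre by (simp add: algebra_simps power2_eq_square)
  finally show ?case by (simp add: S_def M_def g_def)
qed

lemma inverse_ge_tangent_at_square:
  fixes d t :: real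
  assumes "d > 0" "t > 0"
  shows "3 / (2 * t) - d\<^sup>2 / (2 * t ^ 3) \<le> 1 / d"
proof -
  have "0 \<le> (d - t)\<^sup>2 * (d + 2 * t)" using assms by simp
  then have cubic: "3 * t\<^sup>2 * d - d ^ 3 \<le> 2 * t ^ 3"
    by (simp add: algebra_simps power2_eq_square power3_eq_cube)
  have "3 / (2 * t) - d\<^sup>2 / (2 * t ^ 3) = (3 * t\<^sup>2 * d - d ^ 3) / (2 * t ^ 3 * d)"
    using assms by (simp add: field_simps power2_eq_square power3_eq_cube)
  also have "\<dots> \<le> (2 * t ^ 3) / (2 * t ^ 3 * d)"
    using cubic assms by (intro divide_right_mono) auto
  also have "\<dots> = 1 / d" using assms by simp
  finally show ?thesis .
qed

lemma pair_sum_inverse_ge: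
  fixes w d :: "nat \<Rightarrow> nat \<Rightarrow> real" and t :: real
  assumes "t > 0"
    and w_nonneg: "\<And>i j. i < j \<Longrightarrow> j < N \<Longrightarrow> 0 \<le> w i j"
    and d_pos: "\<And>i j. i < j \<Longrightarrow> j < N \<Longrightarrow> 0 < d i j"
  shows "3 / (2 * t) * (\<Sum>j<N. \<Sum>i<j. w i j) - (\<Sum>j<N. \<Sum>i<j. w i j * (d i j)\<^sup>2) / (2 * t ^ 3)
    \<le> (\<Sum>j<N. \<Sum>i<j. w i j / d i j)"
proof -
  have "3 / (2 * t) * (\<Sum>j<N. \<Sum>i<j. w i j) - (\<Sum>j<N. \<Sum>i<j. w i j * (d i j)\<^sup>2) / (2 * t ^ 3)
      = (\<Sum>j<N. \<Sum>i<j. w i j * (3 / (2 * t) - (d i j)\<^sup>2 / (2 * t ^ 3)))"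
    by (simp add: sum_subtractf sum_distrib_left sum_divide_distrib algebra_simps)
  also have "\<dots> \<le> (\<Sum>j<N. \<Sum>i<j. w i j * (1 / d i j))"
    using inverse_ge_tangent_at_square[OF d_pos \<open>t > 0\<close>] w_nonneg
    by (intro sum_mono mult_left_mono) auto
  finally show ?thesis by simp
qed

lemma tangent_bound_at_optimal_scale:
  fixes P M :: real
  assumes "P > 0" "M > 0"
  defines "t \<equiv> sqrt (M / P)"
  shows "3 / (2 * t) * P - M / (2 * t ^ 3) = P powr (3/2) * M powr (-1/2)"
proof -
  have "t > 0" and t_sq: "t\<^sup>2 = M / P" using assms by simp_all
  have "3 / (2 * t) * P - M / (2 * t ^ 3) = (3 * P * t\<^sup>2 - M) / (2 * t ^ 3)"
    using \<open>t > 0\<close> by (simp add: field_simps power2_eq_square power3_eq_cube)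
  also have "\<dots> = M / t ^ 3"
  proof -
    have numerator: "3 * P * t\<^sup>2 - M = 2 * M" using t_sq \<open>P > 0\<close> by simp
    show ?thesis unfolding numerator by simp
  qed
  also have "\<dots> = P / t"
    using t_sq \<open>t > 0\<close> \<open>P > 0\<close> by (simp add: field_simps power2_eq_square power3_eq_cube)
  also have "\<dots> = P * sqrt P / sqrt M"
    using assms by (simp add: real_sqrt_divide field_simps)
  also have "\<dots> = P powr (3/2) * M powr (-1/2)"
    using assms by (simp add: powr_add [of P 1 "1/2", simplified] powr_minus_divide powr_half_sqrt)
  finally show ?thesis .
qed

lemma potential_ge_C_L:
  fixes \<gamma> :: real and m :: "nat \<Rightarrow> real" and r :: "nat \<Rightarrow> real^2"
  assumes "\<gamma> \<ge> 0" and "N \<ge> 2" and m_pos: "\<And>i. i < N \<Longrightarrow> m i > 0"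
    and r_config: "r \<in> config_space N" and normalized: "moment_g N m r = 1"
  shows "C_L \<gamma> N m \<le> potential_f \<gamma> N m r"
proof -
  define P where "P = (\<Sum>j<N. \<Sum>i<j. m i * m j)"
  define M where "M = (\<Sum>i<N. m i)"
  have "P > 0"
    unfolding P_def
    by (rule sum_pos2 [where i = 1])
      (use m_pos \<open>N \<ge> 2\<close> in \<open>auto intro!: sum_nonneg mult_nonneg_nonneg less_imp_le [OF m_pos]\<close>)
  have "M > 0"
    unfolding M_def using \<open>N \<ge> 2\<close> m_pos by (intro sum_pos) (auto simp: lessThan_empty_iff)
  have dist_pos: "\<And>i j. i < j \<Longrightarrow> j < N \<Longrightarrow> 0 < norm (r j - r i)"
    using r_config unfolding config_space_def by fastforce
  have pair_moment_le: "(\<Sum>j<N. \<Sum>i<j. m i * m j * (norm (r j - r i))\<^sup>2) \<le> M"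
    using lagrange_identity_weighted [of m r N] normalized
    unfolding moment_g_def M_def by simp
  define t where "t = sqrt (M / P)"
  have "t > 0" using \<open>P > 0\<close> \<open>M > 0\<close> t_def by simp
  have "P powr (3/2) * M powr (-1/2) = 3 / (2 * t) * P - M / (2 * t ^ 3)"
    using tangent_bound_at_optimal_scale [OF \<open>P > 0\<close> \<open>M > 0\<close>] t_def by simp
  also have "\<dots> \<le> 3 / (2 * t) * P - (\<Sum>j<N. \<Sum>i<j. m i * m j * (norm (r j - r i))\<^sup>2) / (2 * t ^ 3)"
    using pair_moment_le \<open>t > 0\<close> by (simp add: divide_right_mono)
  also have "\<dots> \<le> (\<Sum>j<N. \<Sum>i<j. m i * m j / norm (r j - r i))"
    unfolding P_def using \<open>t > 0\<close> m_pos dist_pos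
    by (intro pair_sum_inverse_ge) (auto intro: less_imp_le)
  finally have "\<gamma> * (P powr (3/2) * M powr (-1/2)) \<le> \<gamma> * (\<Sum>j<N. \<Sum>i<j. m i * m j / norm (r j - r i))"
    using \<open>\<gamma> \<ge> 0\<close> by (rule mult_left_mono)
  moreover have "potential_f \<gamma> N m r = \<gamma> * (\<Sum>j<N. \<Sum>i<j. m i * m j / norm (r j - r i))"
    unfolding potential_f_def by (simp add: sum_distrib_left mult.assoc)
  ultimately show ?thesis
    unfolding C_L_def P_def M_def by (simp add: mult.assoc)
qed

lemma normalized_config_exists:
  fixes m :: "nat \<Rightarrow> real"
  assumes "N > 0" and m_pos: "\<And>i. i < N \<Longrightarrow> m i > 0"
  obtains r where "r \<in> config_space N" and "moment_g N m r = 1"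
proof -
  define Q where "Q = (\<Sum>i<N. m i * (real i + 1)\<^sup>2)"
  have "Q > 0" unfolding Q_def using assms by (intro sum_pos) auto
  define c where "c = 1 / sqrt Q"
  have "c > 0" using \<open>Q > 0\<close> c_def by simp
  define r :: "nat \<Rightarrow> real^2" where "r = (\<lambda>i. (c * (real i + 1)) *\<^sub>R axis 1 1)"
  have norm_r: "norm (r i) = c * (real i + 1)" for i
    unfolding r_def norm_scaleR using \<open>c > 0\<close> by simp
  show thesis
  proof
    show "r \<in> config_space N"
      unfolding config_space_def r_def using \<open>c > 0\<close> by (auto simp: scaleR_cancel_right)
    have "moment_g N m r = c\<^sup>2 * Q"
      unfolding moment_g_def Q_def sum_distrib_left norm_r by (simp add: power_mult_distrib mult.left_commute)
    then show "moment_g N m r = 1"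
      using \<open>Q > 0\<close> by (simp add: c_def power_divide)
  qed
qed

theorem mainTheorem6:
  fixes \<gamma> :: real and N :: nat and m :: "nat \<Rightarrow> real"
  assumes "\<gamma> > 0" and "N \<ge> 2" and "\<And>i. i < N \<Longrightarrow> m i > 0"
  shows "C_min \<gamma> N m \<ge> C_L \<gamma> N m"
proof -
  obtain r where "r \<in> config_space N" "moment_g N m r = 1"
    using normalized_config_exists [of N m] assms by auto
  then have "{potential_f \<gamma> N m r | r. r \<in> config_space N \<and> moment_g N m r = 1} \<noteq> {}"
    by blast
  then show ?thesis
    unfolding C_min_def
    by (rule cInf_greatest) (auto intro: potential_ge_C_L [OF less_imp_le [OF assms(1)] assms(2,3)])
qed

end
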